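(* Let $\Psi(x)=\sup\left\{\lfloor t\rfloor\log\left(1+\frac{x}{t^2}\right):t\geq1\right\}$ for $x\geq0$. Then \[ \Psi(x)\geq\frac{\log 5}{4}\min(x;\sqrt x)\qquad\text{for all }x\geq0. \] *)

theory Defs
  imports Complex_Main
begin

definition Psi :: "real \<Rightarrow> real" where
  "Psi x = (SUP t\<in>{1..}. of_int \<lfloor>t\<rfloor> * ln (1 + x / t^2))"

end

theory Submission
  imports Defs
begin

text \<open>
  For \<open>x \<le> 4\<close> the choice \<open>t = 1\<close> gives \<open>\<Psi>(x) \<ge> log (1 + x) \<ge> 2x / (2 + x)\<close>, and
  \<open>2x / (2 + x) \<ge> min(x, \<surd>x) / 2 \<ge> (log 5 / 4) min(x, \<surd>x)\<close> on \<open>[0, 4]\<close>.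
  For \<open>x \<ge> 4\<close> the choice \<open>t = \<surd>x / 2\<close> makes \<open>x / t\<^sup>2 = 4\<close>, and \<open>\<lfloor>t\<rfloor> \<ge> t / 2\<close> gives
  \<open>\<Psi>(x) \<ge> (\<surd>x / 4) log 5\<close>.
\<close>

lemma bdd_above_Psi_terms:
  fixes x :: real
  assumes "x \<ge> 0"
  shows "bdd_above ((\<lambda>t. of_int \<lfloor>t\<rfloor> * ln (1 + x / t^2)) ` {1..})"
proof (rule bdd_aboveI2)
  fix t :: real
  assume "t \<in> {1..}"
  then have t: "t \<ge> 1" by simp
  have "of_int \<lfloor>t\<rfloor> * ln (1 + x / t^2) \<le> t * (x / t^2)"
    using t assms by (intro mult_mono ln_add_one_self_le_self) auto
  also have "\<dots> = x / t"
    using t by (simp add: power2_eq_square)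
  also have "\<dots> \<le> x"
    using t assms by (simp add: divide_le_eq mult_le_cancel_left1)
  finally show "of_int \<lfloor>t\<rfloor> * ln (1 + x / t^2) \<le> x" .
qed

lemma Psi_ge_term:
  fixes x t :: real
  assumes "x \<ge> 0" and "t \<ge> 1"
  shows "of_int \<lfloor>t\<rfloor> * ln (1 + x / t^2) \<le> Psi x"
  unfolding Psi_def using assms by (intro cSUP_upper bdd_above_Psi_terms) auto

lemma ln_one_plus_ge_divide:
  fixes x :: real
  assumes "x \<ge> 0"
  shows "2 * x / (2 + x) \<le> ln (1 + x)"
proof -
  let ?g = "\<lambda>y::real. ln (1 + y) - 2 * y / (2 + y)"
  have "?g 0 \<le> ?g x"
  proof (rule DERIV_nonneg_imp_nondecreasing[of 0 x ?g, OF assms])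
    fix y :: real
    assume y: "0 \<le> y" "y \<le> x"
    have "(?g has_real_derivative 1 / (1 + y) - 4 / (2 + y)^2) (at y)"
      using y by (auto intro!: derivative_eq_intros simp: power2_eq_square)
    moreover have "1 / (1 + y) - 4 / (2 + y)^2 = y^2 / ((1 + y) * (2 + y)^2)"
      using y by (simp add: divide_simps) (simp add: algebra_simps power2_eq_square)
    ultimately show "\<exists>d. (?g has_real_derivative d) (at y) \<and> 0 \<le> d"
      using y by auto
  qed
  then show ?thesis by simp
qed

lemma ln_5_le_2: "ln (5::real) \<le> 2"
proof -
  have "(5::real) \<le> exp 2"
    using exp_lower_Taylor_quadratic[of "2::real"] by simp
  then show ?thesis
    by (metis exp_gt_zero ln_exp ln_le_cancel_iff zero_less_numeral)
qed

lemma of_int_floor_ge_half: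
  fixes t :: real
  assumes "t \<ge> 1"
  shows "t / 2 \<le> of_int \<lfloor>t\<rfloor>"
proof -
  have "1 \<le> \<lfloor>t\<rfloor>"
    using assms by simp
  then show ?thesis
    using floor_correct[of t] by linarith
qed

lemma min_self_sqrt_ge_one:
  fixes x :: real
  assumes "x \<ge> 1"
  shows "min x (sqrt x) = sqrt x"
  using assms real_sqrt_le_mono[of x "x * x"] by (simp add: mult_le_cancel_left1)

lemma min_self_sqrt_le_one:
  fixes x :: real
  assumes "0 \<le> x" and "x \<le> 1"
  shows "min x (sqrt x) = x"
proof -
  have "x * x \<le> x"
    using assms by (simp add: mult_left_le)
  then have "x \<le> sqrt x"
    using assms real_sqrt_le_mono[of "x * x" x] by simp
  then show ?thesis by simp
qed

lemma Psi_ge_small: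
  fixes x :: real
  assumes "0 \<le> x" and "x \<le> 4"
  shows "ln 5 / 4 * min x (sqrt x) \<le> Psi x"
proof -
  have "min x (sqrt x) / 2 \<le> 2 * x / (2 + x)"
  proof (cases "x \<le> 1")
    case True
    then have "x * x \<le> x * 2"
      using assms by (intro mult_left_mono) auto
    with True show ?thesis
      using assms by (simp add: min_self_sqrt_le_one field_simps)
  next
    case False
    define s where "s = sqrt x"
    have s: "1 \<le> s" "s \<le> 2" and x: "x = s^2"
      using False assms real_sqrt_le_mono[of x 4] unfolding s_def by auto
    have "s^2 + 2 \<le> 4 * s"
      using s mult_mono[of 0 "s - 1" 0 "3 - s"] by (simp add: algebra_simps power2_eq_square)
    then have "s * (s^2 + 2) \<le> s * (4 * s)"
      using s by (intro mult_left_mono) auto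
    moreover have "min x (sqrt x) = s"
      using False by (simp add: min_self_sqrt_ge_one s_def)
    ultimately show ?thesis
      unfolding x using s by (simp add: field_simps power2_eq_square add_pos_pos)
  qed
  also have "\<dots> \<le> ln (1 + x)"
    using assms(1) by (rule ln_one_plus_ge_divide)
  also have "\<dots> = of_int \<lfloor>1::real\<rfloor> * ln (1 + x / 1^2)"
    by simp
  also have "\<dots> \<le> Psi x"
    using assms by (intro Psi_ge_term) auto
  finally have "min x (sqrt x) / 2 \<le> Psi x" .
  moreover have "ln 5 * min x (sqrt x) \<le> 2 * min x (sqrt x)"
    using mult_right_mono[OF ln_5_le_2, of "min x (sqrt x)"] assms by simp
  ultimately show ?thesis by linarith
qed

lemma Psi_ge_large:
  fixes x :: real
  assumes "x \<ge> 4"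
  shows "ln 5 / 4 * sqrt x \<le> Psi x"
proof -
  define t where "t = sqrt x / 2"
  have t: "t \<ge> 1"
    using real_sqrt_le_mono[OF assms] unfolding t_def by simp
  have "x / t^2 = 4"
    using assms unfolding t_def by (simp add: power_divide)
  then have "ln 5 / 4 * sqrt x = t / 2 * ln (1 + x / t^2)"
    unfolding t_def by simp
  also have "\<dots> \<le> of_int \<lfloor>t\<rfloor> * ln (1 + x / t^2)"
    using t \<open>x / t^2 = 4\<close> by (intro mult_right_mono of_int_floor_ge_half) auto
  also have "\<dots> \<le> Psi x"
    using assms t by (intro Psi_ge_term) auto
  finally show ?thesis .
qed

theorem lemma1p10:
  fixes x :: real
  assumes "x \<ge> 0"
  shows "Psi x \<ge> ln 5 / 4 * min x (sqrt x)"
proof (cases "x \<le> 4")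
  case True
  then show ?thesis
    using assms by (rule Psi_ge_small[rotated])
next
  case False
  then show ?thesis
    using Psi_ge_large min_self_sqrt_ge_one by simp
qed

end
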